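(* Let $V$ be a real vector space with a $\sigma$-algebra $\mathcal{B}$ for which every finite-dimensional hyperplane $H=x+T:=\{x+u:u\in T\}$ ($x\in V$, $T$ a finite-dimensional vector subspace) is measurable. Let $Q$ be a probability measure on $\mathcal{B}$ and for $j=0,1,2,\dots$ let $\mathcal{H}_j$ be the collection of all $j$-dimensional hyperplanes in $V$. Then for each $j=0,1,2,\dots$, for any infinite sequence $\{C_i\}$ of distinct hyperplanes in $\mathcal{H}_j$ such that $Q(C_i)$ converges, its limit equals $Q(F)$ for some hyperplane $F$ of dimension less than $j$ such that $F\subset C_i$ for infinitely many $i$. In particular, $Q(C_i)$ cannot be strictly increasing. The same statements hold with finite-dimensional vector subspaces in place of hyperplanes.
   Context: Hyperplanes of dimension $0$ are singletons $\{x\}$; the empty set $\emptyset$ is considered a hyperplane of dimension $-1$. *)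

theory Defs
  imports "HOL-Probability.Probability"
begin

definition fd_subspace_dim :: "'a::real_vector set \<Rightarrow> nat \<Rightarrow> bool" where
  "fd_subspace_dim T j \<longleftrightarrow>
     (\<exists>B. finite B \<and> independent B \<and> span B = T \<and> card B = j)"

text \<open>A hyperplane of dimension j (j \<ge> 0): a translate x + T of a j-dimensional
  subspace T. (The empty set is the hyperplane of dimension -1; it is handled
  separately in the statement.)\<close>
definition hyperplane_dim :: "'a::real_vector set \<Rightarrow> nat \<Rightarrow> bool" where
  "hyperplane_dim H j \<longleftrightarrow> (\<exists>x T. fd_subspace_dim T j \<and> H = {x + u | u. u \<in> T})"

end

theory Submission
  imports Defs
begin

(* By induction on the rank n: if the measures of flats D k of rank at most n converge to L, then
   some infinite subfamily of the D k has an intersection of measure at least L. After passing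
   to a subsequence, either one flat occurs infinitely often, or all D k have rank < n (induction
   hypothesis), or all have rank exactly n and each occurs finitely often. In the last case the
   intersections of infinite subfamilies have lower rank, so by induction the supremum s of their
   measures is attained. If s < L, each D k \<inter> D m has lower rank and is approximated from inside,
   along a common infinite subfamily, by lower-rank flats lying in one infinite intersection;
   hence all but finitely many D k meet a given finite union of D m in measure at most
   s + (L - s)/3, and adding such a D k enlarges the union by at least (L - s)/3, which cannot
   go on forever in a finite measure space.
   For distinct flats C i of the same exact rank, the intersection of that infinite subfamily has
   lower rank, lies in infinitely many C i and therefore has measure exactly L; a strictly
   increasing sequence of measures would exceed its own limit there. *)

section \<open>Graded families of flats in a finite measure space\<close>

lemma infinite_Inter_reindex:
  assumes "inj r" "infinite K" "P (\<Inter>k\<in>K. D (r k))"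
  shows "\<exists>K'. infinite K' \<and> P (\<Inter>k\<in>K'. D k)"
proof (intro exI conjI)
  show "infinite (r ` K)"
    using assms(1,2) by (simp add: finite_image_iff inj_on_subset)
  show "P (\<Inter>k\<in>r ` K. D k)"
    using assms(3) by (simp add: image_image)
qed

lemma convergent_subseq_within:
  fixes f :: "nat \<Rightarrow> real"
  assumes "infinite S" "bounded (range f)"
  obtains \<psi> l where "inj \<psi>" "range \<psi> \<subseteq> S" "(\<lambda>i. f (\<psi> i)) \<longlonglongrightarrow> l"
proof -
  let ?r = "enumerate S"
  have r: "strict_mono ?r" "range ?r \<subseteq> S"
    using strict_mono_enumerate[OF assms(1)] enumerate_in_set[OF assms(1)] by auto
  have "bounded (range (f \<circ> ?r))"
    using assms(2) by (rule bounded_subset) auto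
  then obtain \<phi> l where \<phi>: "strict_mono \<phi>" "((f \<circ> ?r) \<circ> \<phi>) \<longlonglongrightarrow> l"
    using bounded_imp_convergent_subsequence by blast
  show ?thesis
  proof (rule that)
    show "inj (?r \<circ> \<phi>)"
      using r(1) \<phi>(1) by (intro inj_compose strict_mono_imp_inj_on)
    show "range (?r \<circ> \<phi>) \<subseteq> S"
      using r(2) by auto
    show "(\<lambda>i. f ((?r \<circ> \<phi>) i)) \<longlonglongrightarrow> l"
      using \<phi>(2) by (simp add: o_def)
  qed
qed

lemma finite_ge_limit_plus:
  fixes f :: "nat \<Rightarrow> real"
  assumes "(\<lambda>i. f (\<psi> i)) \<longlonglongrightarrow> l" "\<epsilon> > 0"
  shows "finite {k\<in>\<psi> ` I. l + \<epsilon> \<le> f k}"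
proof -
  obtain N where N: "\<And>i. i \<ge> N \<Longrightarrow> f (\<psi> i) < l + \<epsilon>"
    using order_tendstoD(2)[OF assms(1), of "l + \<epsilon>"] assms(2)
    unfolding eventually_sequentially by auto
  have "{k\<in>\<psi> ` I. l + \<epsilon> \<le> f k} \<subseteq> \<psi> ` {..<N}"
  proof
    fix k
    assume "k \<in> {k\<in>\<psi> ` I. l + \<epsilon> \<le> f k}"
    then obtain i where i: "k = \<psi> i" "l + \<epsilon> \<le> f (\<psi> i)" by blast
    moreover have "i < N"
    proof (rule ccontr)
      assume "\<not> i < N"
      then show False using N[of i] i(2) by simp
    qed
    ultimately show "k \<in> \<psi> ` {..<N}" by simp
  qed
  then show ?thesis
    by (rule finite_subset) simp
qed

lemma (in finite_measure) measure_UN_le_inner_UN: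
  assumes "finite I" "\<And>i. i \<in> I \<Longrightarrow> B i \<in> sets M" "\<And>i. i \<in> I \<Longrightarrow> G i \<in> sets M"
    and "\<And>i. i \<in> I \<Longrightarrow> G i \<subseteq> B i"
  shows "measure M (\<Union>i\<in>I. B i) \<le> measure M (\<Union>i\<in>I. G i) + (\<Sum>i\<in>I. measure M (B i) - measure M (G i))"
proof -
  have "measure M (\<Union>i\<in>I. B i) \<le> measure M ((\<Union>i\<in>I. G i) \<union> (\<Union>i\<in>I. B i - G i))"
    using assms by (intro finite_measure_mono sets.Un sets.finite_UN sets.Diff) auto
  also have "\<dots> \<le> measure M (\<Union>i\<in>I. G i) + measure M (\<Union>i\<in>I. B i - G i)"
    using assms by (intro measure_Un_le sets.finite_UN sets.Diff) auto
  also have "measure M (\<Union>i\<in>I. B i - G i) \<le> (\<Sum>i\<in>I. measure M (B i - G i))"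
    using assms by (intro finite_measure_subadditive_finite) auto
  also have "\<dots> = (\<Sum>i\<in>I. measure M (B i) - measure M (G i))"
    using assms by (intro sum.cong refl finite_measure_Diff) auto
  finally show ?thesis by simp
qed

text \<open>\<open>flats n\<close> is the family of flats of rank at most \<open>n\<close>.\<close>

locale graded_flats = finite_measure Q for Q :: "'a measure" +
  fixes flats :: "nat \<Rightarrow> 'a set set"
  assumes flats_sets: "flats n \<subseteq> sets Q"
    and flats_0_unique: "A \<in> flats 0 \<Longrightarrow> B \<in> flats 0 \<Longrightarrow> A = B"
    and flats_Inter: "\<F> \<noteq> {} \<Longrightarrow> \<F> \<subseteq> flats n \<Longrightarrow> \<Inter>\<F> \<in> flats n"
    and flats_psubset:
      "A \<in> flats (Suc n) - flats n \<Longrightarrow> X \<in> flats (Suc n) \<Longrightarrow> X \<subset> A \<Longrightarrow> X \<in> flats n"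
begin

lemma Inter_exact_rank_flats:
  assumes "\<F> \<subseteq> flats (Suc n) - flats n" "A \<in> \<F>" "B \<in> \<F>" "A \<noteq> B"
  shows "\<Inter>\<F> \<in> flats n"
proof -
  have A: "A \<in> flats (Suc n) - flats n" and B: "B \<in> flats (Suc n) - flats n"
    using assms by auto
  have "\<not> A \<subset> B" using flats_psubset[OF B] A by blast
  then have "\<Inter>\<F> \<subset> A" using assms(2-4) by blast
  moreover have "\<Inter>\<F> \<in> flats (Suc n)" using flats_Inter assms(1,2) by blast
  ultimately show ?thesis using flats_psubset[OF A] by blast
qed

lemma limit_le_measure_Inter_subseq:
  assumes "infinite S" "(\<lambda>k. measure Q (D k)) \<longlonglongrightarrow> L"
    and "\<And>r. strict_mono r \<Longrightarrow> range r \<subseteq> S \<Longrightarrow> (\<lambda>i. measure Q (D (r i))) \<longlonglongrightarrow> L \<Longrightarrow>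
           \<exists>K. infinite K \<and> L \<le> measure Q (\<Inter>i\<in>K. D (r i))"
  shows "\<exists>K. infinite K \<and> L \<le> measure Q (\<Inter>k\<in>K. D k)"
proof -
  let ?r = "enumerate S"
  have r: "strict_mono ?r" "range ?r \<subseteq> S"
    using strict_mono_enumerate[OF assms(1)] enumerate_in_set[OF assms(1)] by auto
  have "(\<lambda>i. measure Q (D (?r i))) \<longlonglongrightarrow> L"
    using LIMSEQ_subseq_LIMSEQ[OF assms(2) r(1)] by (simp add: o_def)
  then obtain K where "infinite K" "L \<le> measure Q (\<Inter>i\<in>K. D (?r i))"
    using assms(3)[OF r] by blast
  then show ?thesis
    using infinite_Inter_reindex[OF strict_mono_imp_inj_on[OF r(1)], of K "\<lambda>X. L \<le> measure Q X"]
    by blast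
qed

lemma constant_limit_le_measure_Inter:
  assumes "\<And>k. D k = A" "(\<lambda>k. measure Q (D k)) \<longlonglongrightarrow> L"
  shows "\<exists>K. infinite K \<and> L \<le> measure Q (\<Inter>k\<in>K. D k)"
proof -
  have "(\<lambda>k. measure Q A) \<longlonglongrightarrow> L"
    using assms by simp
  then have "L = measure Q A"
    using LIMSEQ_unique tendsto_const by blast
  then show ?thesis
    using assms(1) by (intro exI[of _ UNIV]) simp
qed

end

text \<open>The induction step of \<open>graded_flats.limit_le_measure_Inter\<close> below; the first
  assumption is the induction hypothesis.\<close>

locale rank_step = graded_flats +
  fixes n :: nat and D :: "nat \<Rightarrow> 'a set" and L :: real
  assumes lower_rank_limit_le_measure_Inter:
      "\<And>E l. range E \<subseteq> flats n \<Longrightarrow> (\<lambda>k. measure Q (E k)) \<longlonglongrightarrow> l \<Longrightarrow>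
         \<exists>K. infinite K \<and> l \<le> measure Q (\<Inter>k\<in>K. E k)"
    and D_exact_rank: "D k \<in> flats (Suc n) - flats n"
    and finite_fibres: "finite (D -` {A})"
    and D_limit: "(\<lambda>k. measure Q (D k)) \<longlonglongrightarrow> L"
begin

lemma D_sets: "D k \<in> sets Q"
  using D_exact_rank flats_sets by blast

lemma Inter_D_lower_rank:
  assumes "k \<in> K" "m \<in> K" "D k \<noteq> D m"
  shows "(\<Inter>i\<in>K. D i) \<in> flats n"
  using Inter_exact_rank_flats[of "D ` K" n "D k" "D m"] D_exact_rank assms by blast

lemma Int_D_lower_rank: "D k \<noteq> D m \<Longrightarrow> D k \<inter> D m \<in> flats n"
  using Inter_D_lower_rank[of k "{k, m}" m] by simp

lemma Inter_infinite_lower_rank: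
  assumes "infinite K"
  shows "(\<Inter>k\<in>K. D k) \<in> flats n"
proof -
  obtain a where a: "a \<in> K" using infinite_imp_nonempty[OF assms] by blast
  have "infinite (K - D -` {D a})"
    using Diff_infinite_finite[OF finite_fibres assms] .
  then obtain b where "b \<in> K" "D b \<noteq> D a"
    using infinite_imp_nonempty by blast
  then show ?thesis using Inter_D_lower_rank a by blast
qed

definition Inter_sup :: real where
  "Inter_sup = (SUP K\<in>{K. infinite K}. measure Q (\<Inter>k\<in>K. D k))"

lemma bdd_above_measure_Inter: "bdd_above ((\<lambda>K. measure Q (\<Inter>k\<in>K. D k)) ` {K. infinite K})"
  using bounded_measure by (rule bdd_aboveI2)

lemma measure_Inter_le_Inter_sup: "infinite K \<Longrightarrow> measure Q (\<Inter>k\<in>K. D k) \<le> Inter_sup"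
  unfolding Inter_sup_def by (rule cSUP_upper[OF _ bdd_above_measure_Inter]) simp

lemma Inter_sup_attained: "\<exists>K. infinite K \<and> Inter_sup \<le> measure Q (\<Inter>k\<in>K. D k)"
proof -
  have "\<exists>K. infinite K \<and> Inter_sup - inverse (Suc m) < measure Q (\<Inter>k\<in>K. D k)" for m :: nat
  proof -
    have ne: "{K :: nat set. infinite K} \<noteq> {}" by auto
    have "Inter_sup - inverse (Suc m) < Inter_sup" by simp
    then show ?thesis
      unfolding Inter_sup_def by (subst (asm) less_cSUP_iff[OF ne bdd_above_measure_Inter]) auto
  qed
  then obtain Ks where Ks: "\<And>m. infinite (Ks m)"
    "\<And>m. Inter_sup - inverse (Suc m) < measure Q (\<Inter>k\<in>Ks m. D k)"
    by metis
  define E where "E m = (\<Inter>k\<in>Ks m. D k)" for m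
  have "(\<lambda>m. measure Q (E m)) \<longlonglongrightarrow> Inter_sup"
  proof (rule tendsto_sandwich)
    show "\<forall>\<^sub>F m in sequentially. Inter_sup - inverse (Suc m) \<le> measure Q (E m)"
      using Ks(2) unfolding E_def by (simp add: less_imp_le)
    show "\<forall>\<^sub>F m in sequentially. measure Q (E m) \<le> Inter_sup"
      using measure_Inter_le_Inter_sup Ks(1) unfolding E_def by simp
    show "(\<lambda>m. Inter_sup - inverse (Suc m)) \<longlonglongrightarrow> Inter_sup"
      using tendsto_diff[OF tendsto_const LIMSEQ_inverse_real_of_nat, of Inter_sup] by simp
  qed simp
  moreover have "range E \<subseteq> flats n"
    using Inter_infinite_lower_rank Ks(1) unfolding E_def by auto
  ultimately obtain M where M: "infinite M" "Inter_sup \<le> measure Q (\<Inter>m\<in>M. E m)"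
    using lower_rank_limit_le_measure_Inter by blast
  have "(\<Inter>m\<in>M. E m) = (\<Inter>k\<in>(\<Union>m\<in>M. Ks m). D k)"
    unfolding E_def by auto
  moreover have "infinite (\<Union>m\<in>M. Ks m)"
    using M(1) Ks(1) infinite_imp_nonempty by (metis UN_upper infinite_super ex_in_conv)
  ultimately show ?thesis using M(2) by metis
qed

text \<open>The last condition says \<open>limsup\<close> of \<open>measure Q (E k)\<close> along \<open>K\<close> is at most \<open>measure Q G\<close>.\<close>

definition inner_approx :: "nat set \<Rightarrow> (nat \<Rightarrow> 'a set) \<Rightarrow> 'a set \<Rightarrow> bool" where
  "inner_approx K E G \<longleftrightarrow> G \<in> flats n \<and> (\<forall>k\<in>K. G \<subseteq> E k) \<and>
     (\<forall>\<epsilon>>0. finite {k\<in>K. measure Q G + \<epsilon> \<le> measure Q (E k)})"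

lemma inner_approx_subset:
  assumes "inner_approx K E G" "K' \<subseteq> K"
  shows "inner_approx K' E G"
  unfolding inner_approx_def
proof (intro conjI allI impI)
  show "G \<in> flats n" "\<forall>k\<in>K'. G \<subseteq> E k"
    using assms unfolding inner_approx_def by auto
  fix \<epsilon> :: real
  assume "\<epsilon> > 0"
  then have "finite {k\<in>K. measure Q G + \<epsilon> \<le> measure Q (E k)}"
    using assms(1) unfolding inner_approx_def by blast
  then show "finite {k\<in>K'. measure Q G + \<epsilon> \<le> measure Q (E k)}"
    by (rule rev_finite_subset) (use assms(2) in blast)
qed

lemma exists_inner_approx:
  assumes "infinite K0" "\<And>k. k \<in> K0 \<Longrightarrow> E k \<in> flats n"
  shows "\<exists>K\<subseteq>K0. infinite K \<and> (\<exists>G. inner_approx K E G)"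
proof -
  have "bounded (range (\<lambda>k. measure Q (E k)))"
    unfolding bounded_iff using bounded_measure by auto
  then obtain \<psi> l where \<psi>: "inj \<psi>" "range \<psi> \<subseteq> K0"
    and lim: "(\<lambda>i. measure Q (E (\<psi> i))) \<longlonglongrightarrow> l"
    using convergent_subseq_within[OF assms(1)] by blast
  moreover have "range (\<lambda>i. E (\<psi> i)) \<subseteq> flats n"
    using \<psi>(2) assms(2) by auto
  ultimately obtain I where I: "infinite I" "l \<le> measure Q (\<Inter>i\<in>I. E (\<psi> i))"
    using lower_rank_limit_le_measure_Inter by blast
  define K where "K = \<psi> ` I"
  define G where "G = (\<Inter>k\<in>K. E k)"
  have G_eq: "G = (\<Inter>i\<in>I. E (\<psi> i))"
    unfolding G_def K_def by (simp add: image_image)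
  have K: "infinite K" "K \<subseteq> K0"
    unfolding K_def using I(1) \<psi> by (auto simp: finite_image_iff inj_on_subset)
  have "inner_approx K E G"
    unfolding inner_approx_def
  proof (intro conjI allI impI)
    show "G \<in> flats n"
      unfolding G_def using K assms(2) infinite_imp_nonempty by (intro flats_Inter) auto
    show "\<forall>k\<in>K. G \<subseteq> E k"
      unfolding G_def by blast
    fix \<epsilon> :: real
    assume "\<epsilon> > 0"
    have "{k\<in>K. measure Q G + \<epsilon> \<le> measure Q (E k)} \<subseteq> {k\<in>\<psi> ` I. l + \<epsilon> \<le> measure Q (E k)}"
      using I(2) unfolding K_def G_eq by auto
    then show "finite {k\<in>K. measure Q G + \<epsilon> \<le> measure Q (E k)}"
      using finite_ge_limit_plus[of "\<lambda>k. measure Q (E k)", OF lim \<open>\<epsilon> > 0\<close>] by (rule finite_subset)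
  qed
  then show ?thesis using K by blast
qed

lemma exists_common_inner_approx:
  assumes "finite M"
  shows "infinite K0 \<Longrightarrow> (\<forall>k\<in>K0. \<forall>m\<in>M. D k \<noteq> D m) \<Longrightarrow>
    \<exists>K\<subseteq>K0. infinite K \<and> (\<exists>G. \<forall>m\<in>M. inner_approx K (\<lambda>k. D k \<inter> D m) (G m))"
  using assms
proof (induction M arbitrary: K0 rule: finite_induct)
  case empty
  then show ?case by blast
next
  case (insert m M)
  have "\<forall>k\<in>K0. \<forall>m'\<in>M. D k \<noteq> D m'"
    using insert.prems(2) by simp
  from insert.IH[OF insert.prems(1) this] obtain K1 G1 where K1: "K1 \<subseteq> K0" "infinite K1"
      "\<forall>m'\<in>M. inner_approx K1 (\<lambda>k. D k \<inter> D m') (G1 m')"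
    by blast
  have "D k \<inter> D m \<in> flats n" if "k \<in> K1" for k
    using Int_D_lower_rank insert.prems(2) K1(1) that by blast
  then obtain K2 G2 where K2: "K2 \<subseteq> K1" "infinite K2" "inner_approx K2 (\<lambda>k. D k \<inter> D m) G2"
    using exists_inner_approx[OF K1(2), of "\<lambda>k. D k \<inter> D m"] by blast
  have "inner_approx K2 (\<lambda>k. D k \<inter> D m') ((G1(m := G2)) m')" if "m' \<in> insert m M" for m'
  proof (cases "m' = m")
    case True
    then show ?thesis using K2(3) by simp
  next
    case False
    then show ?thesis using that K1(3) inner_approx_subset[OF _ K2(1)] by simp
  qed
  then show ?case
    using K1(1) K2(1,2) by (intro exI[of _ K2] conjI exI[of _ "G1(m := G2)"] ballI) auto
qed

lemma inner_approx_sum_gaps_lt: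
  assumes "finite M" "infinite K" "\<delta> > 0" "\<forall>m\<in>M. inner_approx K (E m) (G m)"
  shows "\<exists>k\<in>K. (\<Sum>m\<in>M. measure Q (E m k) - measure Q (G m)) < \<delta>"
proof -
  define \<epsilon> where "\<epsilon> = \<delta> / (real (card M) + 1)"
  define B where "B = (\<Union>m\<in>M. {k\<in>K. measure Q (G m) + \<epsilon> \<le> measure Q (E m k)})"
  have "\<epsilon> > 0" using assms(3) by (simp add: \<epsilon>_def)
  then have "finite {k\<in>K. measure Q (G m) + \<epsilon> \<le> measure Q (E m k)}" if "m \<in> M" for m
    using assms(4) that unfolding inner_approx_def by blast
  then have "finite B"
    unfolding B_def using assms(1) by (intro finite_UN_I)
  then have "K - B \<noteq> {}"
    using Diff_infinite_finite[OF _ assms(2)] infinite_imp_nonempty by blast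
  then obtain k where k: "k \<in> K" "k \<notin> B" by blast
  then have gaps: "measure Q (E m k) - measure Q (G m) < \<epsilon>" if "m \<in> M" for m
    using that unfolding B_def by auto
  have "(\<Sum>m\<in>M. measure Q (E m k) - measure Q (G m)) \<le> real (card M) * \<epsilon>"
    by (rule sum_bounded_above, rule less_imp_le, rule gaps)
  also have "\<dots> < (real (card M) + 1) * \<epsilon>"
    using \<open>\<epsilon> > 0\<close> by simp
  also have "\<dots> = \<delta>"
    unfolding \<epsilon>_def by simp
  finally show ?thesis using k(1) by blast
qed

lemma measure_Int_UN_le_Inter_sup:
  assumes "finite M" "infinite K" "k \<in> K" "\<forall>m\<in>M. inner_approx K (\<lambda>k. D k \<inter> D m) (G m)"
  shows "measure Q (D k \<inter> (\<Union>m\<in>M. D m))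
    \<le> Inter_sup + (\<Sum>m\<in>M. measure Q (D k \<inter> D m) - measure Q (G m))"
proof -
  have G: "G m \<in> sets Q" "G m \<subseteq> (\<Inter>k\<in>K. D k \<inter> D m)" if "m \<in> M" for m
    using assms(4) that flats_sets unfolding inner_approx_def by blast+
  \<comment> \<open>All \<open>G m\<close> lie in one infinite intersection of the \<open>D k\<close>, so their union has measure at most
    \<open>Inter_sup\<close>.\<close>
  have "measure Q (\<Union>m\<in>M. G m) \<le> measure Q (\<Inter>k\<in>K. D k)"
  proof (rule finite_measure_mono)
    show "(\<Union>m\<in>M. G m) \<subseteq> (\<Inter>k\<in>K. D k)" using G(2) by blast
    show "(\<Inter>k\<in>K. D k) \<in> sets Q"
      using Inter_infinite_lower_rank[OF assms(2)] flats_sets by blast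
  qed
  moreover have "measure Q (\<Inter>k\<in>K. D k) \<le> Inter_sup"
    using assms(2) by (rule measure_Inter_le_Inter_sup)
  moreover have "measure Q (\<Union>m\<in>M. D k \<inter> D m) \<le>
      measure Q (\<Union>m\<in>M. G m) + (\<Sum>m\<in>M. measure Q (D k \<inter> D m) - measure Q (G m))"
  proof (rule measure_UN_le_inner_UN[OF assms(1)])
    show "D k \<inter> D m \<in> sets Q" for m by (intro sets.Int D_sets)
    show "G m \<in> sets Q" "G m \<subseteq> D k \<inter> D m" if "m \<in> M" for m
      using G[OF that] assms(3) by blast+
  qed
  moreover have "measure Q (D k \<inter> (\<Union>m\<in>M. D m)) = measure Q (\<Union>m\<in>M. D k \<inter> D m)"
    by (simp only: Int_UN_distrib)
  ultimately show ?thesis by linarith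
qed

lemma finite_Int_UN_measure_gt:
  assumes "\<delta> > 0" "finite M"
  shows "finite {k. Inter_sup + \<delta> < measure Q (D k \<inter> (\<Union>m\<in>M. D m))}"
proof (rule ccontr)
  define K0 where "K0 = {k. Inter_sup + \<delta> < measure Q (D k \<inter> (\<Union>m\<in>M. D m))}"
  define R where "R = (\<Union>m\<in>M. D -` {D m})"
  assume "infinite {k. Inter_sup + \<delta> < measure Q (D k \<inter> (\<Union>m\<in>M. D m))}"
  moreover have "finite R"
    unfolding R_def using assms(2) finite_fibres by (intro finite_UN_I)
  ultimately have "infinite (K0 - R)"
    unfolding K0_def by (intro Diff_infinite_finite)
  moreover have "\<forall>k\<in>K0 - R. \<forall>m\<in>M. D k \<noteq> D m"
    unfolding R_def by blast
  ultimately have "\<exists>K\<subseteq>K0 - R. infinite K \<and> (\<exists>G. \<forall>m\<in>M. inner_approx K (\<lambda>k. D k \<inter> D m) (G m))"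
    by (rule exists_common_inner_approx[OF assms(2)])
  then obtain K G where K: "K \<subseteq> K0 - R" "infinite K"
    and G: "\<forall>m\<in>M. inner_approx K (\<lambda>k. D k \<inter> D m) (G m)"
    by blast
  then obtain k where k: "k \<in> K"
    and gaps: "(\<Sum>m\<in>M. measure Q (D k \<inter> D m) - measure Q (G m)) < \<delta>"
    using inner_approx_sum_gaps_lt[OF assms(2) K(2) assms(1), of "\<lambda>m k. D k \<inter> D m" G] by blast
  have "k \<in> K0" using k K(1) by blast
  then have "Inter_sup + \<delta> < measure Q (D k \<inter> (\<Union>m\<in>M. D m))"
    unfolding K0_def by simp
  then show False
    using measure_Int_UN_le_Inter_sup[OF assms(2) K(2) k G] gaps by linarith
qed

lemma measure_UN_unbounded:
  assumes "Inter_sup < L"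
  shows "\<exists>M. finite M \<and> real N * ((L - Inter_sup) / 3) \<le> measure Q (\<Union>m\<in>M. D m)"
proof (induction N)
  case 0
  show ?case by (intro exI[of _ "{}"]) simp
next
  case (Suc N)
  define \<delta> where "\<delta> = (L - Inter_sup) / 3"
  have "\<delta> > 0" using assms by (simp add: \<delta>_def)
  obtain M where M: "finite M" "real N * \<delta> \<le> measure Q (\<Union>m\<in>M. D m)"
    using Suc.IH unfolding \<delta>_def by blast
  let ?U = "\<Union>m\<in>M. D m"
  have "\<forall>\<^sub>F k in sequentially. L - \<delta> < measure Q (D k)"
    using order_tendstoD(1)[OF D_limit] \<open>\<delta> > 0\<close> by simp
  moreover have "\<forall>\<^sub>F k in sequentially. measure Q (D k \<inter> ?U) \<le> Inter_sup + \<delta>"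
    using finite_Int_UN_measure_gt[OF \<open>\<delta> > 0\<close> M(1)]
    unfolding cofinite_eq_sequentially[symmetric] eventually_cofinite by (simp add: not_le)
  ultimately have "\<forall>\<^sub>F k in sequentially. L - \<delta> < measure Q (D k) \<and> measure Q (D k \<inter> ?U) \<le> Inter_sup + \<delta>"
    by (rule eventually_conj)
  then obtain k where k: "L - \<delta> < measure Q (D k)" "measure Q (D k \<inter> ?U) \<le> Inter_sup + \<delta>"
    unfolding eventually_sequentially by auto
  have U_sets: "?U \<in> sets Q" using M(1) D_sets by blast
  have "measure Q (\<Union>m\<in>insert k M. D m) = measure Q ?U + (measure Q (D k) - measure Q (D k \<inter> ?U))"
    using finite_measure_Union'[OF U_sets D_sets] finite_measure_Diff'[OF D_sets U_sets]
    by (simp add: Un_commute)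
  moreover have "real (Suc N) * \<delta> = real N * \<delta> + \<delta>"
    by (simp add: algebra_simps)
  moreover have "L = Inter_sup + 3 * \<delta>"
    by (simp add: \<delta>_def field_simps)
  ultimately have "real (Suc N) * \<delta> \<le> measure Q (\<Union>m\<in>insert k M. D m)"
    using M(2) k by linarith
  then show ?case
    using M(1) unfolding \<delta>_def by (intro exI[of _ "insert k M"]) simp
qed

lemma limit_le_Inter_sup: "L \<le> Inter_sup"
proof (rule ccontr)
  assume "\<not> L \<le> Inter_sup"
  then have less: "Inter_sup < L" by simp
  then obtain N :: nat where "measure Q (space Q) < real N * ((L - Inter_sup) / 3)"
    using reals_Archimedean3[of "(L - Inter_sup) / 3"] by auto
  moreover obtain M where "real N * ((L - Inter_sup) / 3) \<le> measure Q (\<Union>m\<in>M. D m)"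
    using measure_UN_unbounded[OF less] by blast
  ultimately show False
    using bounded_measure[of "\<Union>m\<in>M. D m"] by linarith
qed

lemma exact_rank_limit_le_measure_Inter: "\<exists>K. infinite K \<and> L \<le> measure Q (\<Inter>k\<in>K. D k)"
  using Inter_sup_attained limit_le_Inter_sup by (meson order_trans)

end

context graded_flats
begin

lemma limit_le_measure_Inter_step:
  assumes IH: "\<And>E l. range E \<subseteq> flats n \<Longrightarrow> (\<lambda>k. measure Q (E k)) \<longlonglongrightarrow> l \<Longrightarrow>
      \<exists>K. infinite K \<and> l \<le> measure Q (\<Inter>k\<in>K. E k)"
    and D: "range D \<subseteq> flats (Suc n)" "\<And>A. finite (D -` {A})" "(\<lambda>k. measure Q (D k)) \<longlonglongrightarrow> L"
  shows "\<exists>K. infinite K \<and> L \<le> measure Q (\<Inter>k\<in>K. D k)"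
proof -
  have "{k. D k \<in> flats n} \<union> {k. D k \<notin> flats n} = UNIV"
    by blast
  then consider (lower) "infinite {k. D k \<in> flats n}" | (exact) "infinite {k. D k \<notin> flats n}"
    using infinite_UNIV_nat finite_UnI by metis
  then show ?thesis
  proof cases
    case lower
    show ?thesis
    proof (rule limit_le_measure_Inter_subseq[OF lower D(3)])
      fix r
      assume r: "range r \<subseteq> {k. D k \<in> flats n}" "(\<lambda>i. measure Q (D (r i))) \<longlonglongrightarrow> L"
      then have "range (\<lambda>i. D (r i)) \<subseteq> flats n" by auto
      then show "\<exists>K. infinite K \<and> L \<le> measure Q (\<Inter>i\<in>K. D (r i))"
        by (rule IH[OF _ r(2)])
    qed
  next
    case exact
    show ?thesis
    proof (rule limit_le_measure_Inter_subseq[OF exact D(3)])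
      fix r
      assume r: "strict_mono r" "range r \<subseteq> {k. D k \<notin> flats n}"
        "(\<lambda>i. measure Q (D (r i))) \<longlonglongrightarrow> L"
      interpret rank_step Q flats n "\<lambda>i. D (r i)" L
      proof
        show "D (r k) \<in> flats (Suc n) - flats n" for k
          using D(1) r(2) by auto
        show "finite ((\<lambda>i. D (r i)) -` {A})" for A
          using finite_vimageI[OF D(2) strict_mono_imp_inj_on[OF r(1)]]
          by (simp add: vimage_def)
      qed (fact IH r(3))+
      show "\<exists>K. infinite K \<and> L \<le> measure Q (\<Inter>i\<in>K. D (r i))"
        by (rule exact_rank_limit_le_measure_Inter)
    qed
  qed
qed

theorem limit_le_measure_Inter:
  "range D \<subseteq> flats n \<Longrightarrow> (\<lambda>k. measure Q (D k)) \<longlonglongrightarrow> L \<Longrightarrow>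
    \<exists>K. infinite K \<and> L \<le> measure Q (\<Inter>k\<in>K. D k)"
proof (induction n arbitrary: D L)
  case 0
  then have "D k = D 0" for k
    using flats_0_unique by blast
  then show ?case
    using "0.prems"(2) by (rule constant_limit_le_measure_Inter)
next
  case (Suc n)
  consider (repeated) A where "infinite (D -` {A})" | (finite_fibres) "\<And>A. finite (D -` {A})"
    by blast
  then show ?case
  proof cases
    case repeated
    show ?thesis
    proof (rule limit_le_measure_Inter_subseq[OF repeated Suc.prems(2)])
      fix r
      assume "range r \<subseteq> D -` {A}" "(\<lambda>i. measure Q (D (r i))) \<longlonglongrightarrow> L"
      then show "\<exists>K. infinite K \<and> L \<le> measure Q (\<Inter>i\<in>K. D (r i))"
        by (intro constant_limit_le_measure_Inter[of _ A]) auto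
    qed
  next
    case finite_fibres
    show ?thesis
      by (rule limit_le_measure_Inter_step[OF Suc.IH Suc.prems(1) finite_fibres Suc.prems(2)])
  qed
qed

theorem limit_measure_eq_lower_flat:
  assumes "inj C" "\<And>i. C i \<in> flats (Suc n) - flats n" "(\<lambda>i. measure Q (C i)) \<longlonglongrightarrow> L"
  shows "\<exists>F\<in>flats n. L = measure Q F \<and> infinite {i. F \<subseteq> C i}"
proof -
  obtain K where K: "infinite K" "L \<le> measure Q (\<Inter>k\<in>K. C k)"
    using limit_le_measure_Inter[of C "Suc n" L] assms(2,3) by blast
  define F where "F = (\<Inter>k\<in>K. C k)"
  obtain a where a: "a \<in> K" using infinite_imp_nonempty[OF K(1)] by blast
  obtain b where b: "b \<in> K" "b \<noteq> a"
    using infinite_imp_nonempty[of "K - {a}"] K(1) by auto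
  have "F \<in> flats n"
    unfolding F_def using assms(1,2) a b
    by (intro Inter_exact_rank_flats[of _ n "C a" "C b"]) (auto dest: injD)
  moreover have "measure Q F \<le> L"
  proof -
    let ?r = "enumerate K"
    have "(\<lambda>i. measure Q (C (?r i))) \<longlonglongrightarrow> L"
      using LIMSEQ_subseq_LIMSEQ[OF assms(3) strict_mono_enumerate[OF K(1)]] by (simp add: o_def)
    moreover have "measure Q F \<le> measure Q (C (?r i))" for i
    proof (rule finite_measure_mono)
      show "F \<subseteq> C (?r i)" unfolding F_def using enumerate_in_set[OF K(1)] by blast
      show "C (?r i) \<in> sets Q" using assms(2) flats_sets by blast
    qed
    ultimately show ?thesis
      by (intro LIMSEQ_le_const) auto
  qed
  moreover have "K \<subseteq> {i. F \<subseteq> C i}"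
    unfolding F_def by blast
  then have "infinite {i. F \<subseteq> C i}"
    using K(1) infinite_super by blast
  ultimately show ?thesis
    using K(2) unfolding F_def by (blast intro: antisym)
qed

theorem not_strict_mono_measure:
  fixes C :: "nat \<Rightarrow> 'a set"
  assumes "inj C" "\<And>i. C i \<in> flats (Suc n) - flats n"
  shows "\<not> strict_mono (\<lambda>i. measure Q (C i))"
proof
  assume mono: "strict_mono (\<lambda>i. measure Q (C i))"
  have bdd: "bdd_above (range (\<lambda>i. measure Q (C i)))"
    using bounded_measure by (intro bdd_aboveI2)
  have "(\<lambda>i. measure Q (C i)) \<longlonglongrightarrow> (SUP i. measure Q (C i))"
    using bdd strict_mono_mono[OF mono] by (rule LIMSEQ_incseq_SUP)
  then obtain F where F: "F \<in> flats n" "(SUP i. measure Q (C i)) = measure Q F"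
      "infinite {i. F \<subseteq> C i}"
    using limit_measure_eq_lower_flat[OF assms] by blast
  then obtain i where "F \<subseteq> C i"
    using infinite_imp_nonempty by blast
  then have "measure Q F \<le> measure Q (C i)"
    using assms(2) flats_sets by (intro finite_measure_mono) auto
  also have "\<dots> < measure Q (C (Suc i))"
    using mono by (simp add: strict_mono_def)
  also have "\<dots> \<le> (SUP i. measure Q (C i))"
    using bdd by (rule cSUP_upper[rotated]) simp
  finally show False using F(2) by simp
qed

end

section \<open>Subspaces and hyperplanes\<close>

lemma fd_subspace_dim_subspace: "fd_subspace_dim T k \<Longrightarrow> subspace T"
  unfolding fd_subspace_dim_def by auto

lemma fd_subspace_dim_dim: "fd_subspace_dim T k \<Longrightarrow> dim T = k"
  unfolding fd_subspace_dim_def by (metis dim_eq_card span_span)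

lemma fd_subspace_dim_unique: "fd_subspace_dim T k \<Longrightarrow> fd_subspace_dim T k' \<Longrightarrow> k = k'"
  using fd_subspace_dim_dim by blast

lemma fd_subspace_dim_0_iff: "fd_subspace_dim T 0 \<longleftrightarrow> T = {0}"
  unfolding fd_subspace_dim_def
  by (metis card_0_eq finite.emptyI independent_empty span_empty)

lemma fd_subspace_dim_subset:
  assumes "subspace S" "S \<subseteq> T" "fd_subspace_dim T k"
  shows "fd_subspace_dim S (dim S) \<and> dim S \<le> k"
proof -
  obtain B where B: "finite B" "independent B" "span B = T" "card B = k"
    using assms(3) unfolding fd_subspace_dim_def by blast
  obtain B' where B': "B' \<subseteq> S" "independent B'" "S \<subseteq> span B'" "card B' = dim S"
    by (rule basis_exists)
  have "finite B' \<and> card B' \<le> k"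
    using independent_span_bound[OF B(1) B'(2)] B'(1) assms(2) B by auto
  moreover have "span B' = S"
    using span_subspace B' assms(1) by blast
  ultimately show ?thesis
    unfolding fd_subspace_dim_def using B' by auto
qed

lemma fd_subspace_dim_psubset:
  assumes "subspace S" "S \<subset> T" "fd_subspace_dim T k"
  shows "\<exists>k'<k. fd_subspace_dim S k'"
proof -
  obtain B where B: "finite B" "independent B" "span B = T" "card B = k"
    using assms(3) unfolding fd_subspace_dim_def by blast
  have S: "fd_subspace_dim S (dim S)"
    using fd_subspace_dim_subset[OF assms(1) psubset_imp_subset[OF assms(2)] assms(3)] by blast
  then obtain B' where B': "finite B'" "independent B'" "span B' = S" "card B' = dim S"
    unfolding fd_subspace_dim_def by blast
  obtain y where y: "y \<in> T" "y \<notin> S" using assms(2) by blast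
  then have "independent (insert y B')" "y \<notin> B'"
    using B'(2,3) independent_insertI span_base by auto
  moreover have "insert y B' \<subseteq> span B"
    using B(3) B'(3) assms(2) y(1) span_superset[of B'] by auto
  ultimately have "card (insert y B') \<le> k"
    using independent_span_bound[OF B(1)] B(4) by blast
  then have "dim S < k" using B'(1,4) \<open>y \<notin> B'\<close> by simp
  then show ?thesis using S by blast
qed

lemma subspace_translation_self:
  assumes "subspace T" "u \<in> T"
  shows "(\<lambda>v. u + v) ` T = T"
proof
  show "(\<lambda>v. u + v) ` T \<subseteq> T" using assms subspace_add by blast
  show "T \<subseteq> (\<lambda>v. u + v) ` T"
  proof
    fix v assume "v \<in> T"
    then have "v - u \<in> T" using assms subspace_diff by blast
    then show "v \<in> (\<lambda>v. u + v) ` T" by (rule rev_image_eqI) simp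
  qed
qed

lemma hyperplane_dim_translate:
  assumes "p \<in> H"
  shows "hyperplane_dim H k \<longleftrightarrow> fd_subspace_dim ((\<lambda>y. - p + y) ` H) k"
proof
  assume "hyperplane_dim H k"
  then obtain x T where T: "fd_subspace_dim T k" "H = (\<lambda>u. x + u) ` T"
    unfolding hyperplane_dim_def by (auto simp: setcompr_eq_image)
  have "subspace T" using T(1) by (rule fd_subspace_dim_subspace)
  obtain u where u: "u \<in> T" "p = x + u" using assms T(2) by blast
  have "(\<lambda>y. - p + y) ` H = (\<lambda>v. - u + v) ` T"
    unfolding T(2) image_image u(2) by (simp add: algebra_simps)
  also have "\<dots> = T"
    using subspace_translation_self[OF \<open>subspace T\<close> subspace_neg[OF \<open>subspace T\<close> u(1)]] .
  finally show "fd_subspace_dim ((\<lambda>y. - p + y) ` H) k" using T(1) by simp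
next
  assume "fd_subspace_dim ((\<lambda>y. - p + y) ` H) k"
  moreover have "H = {p + u | u. u \<in> (\<lambda>y. - p + y) ` H}"
    by (auto simp: image_iff intro!: exI[of _ "x - p" for x])
  ultimately show "hyperplane_dim H k"
    unfolding hyperplane_dim_def by blast
qed

lemma hyperplane_dim_nonempty: "hyperplane_dim H k \<Longrightarrow> H \<noteq> {}"
  unfolding hyperplane_dim_def
  using fd_subspace_dim_subspace subspace_0 by fastforce

lemma hyperplane_dim_unique:
  assumes "hyperplane_dim H k" "hyperplane_dim H k'"
  shows "k = k'"
proof -
  obtain p where p: "p \<in> H" using hyperplane_dim_nonempty[OF assms(1)] by blast
  show ?thesis
    using assms unfolding hyperplane_dim_translate[OF p] by (rule fd_subspace_dim_unique)
qed

lemma fd_subspace_dim_imp_hyperplane_dim: "fd_subspace_dim T k \<Longrightarrow> hyperplane_dim T k"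
  unfolding hyperplane_dim_def by force

lemma hyperplane_translate_subspace:
  assumes "hyperplane_dim H k" "p \<in> H"
  shows "subspace ((\<lambda>y. - p + y) ` H)"
  using assms hyperplane_dim_translate fd_subspace_dim_subspace by blast

definition subspaces_dim_le :: "nat \<Rightarrow> 'a::real_vector set set" where
  "subspaces_dim_le n = {T. \<exists>k\<le>n. fd_subspace_dim T k}"

text \<open>The rank of a hyperplane is its dimension plus one, so that the empty set (the hyperplane
  of dimension \<open>-1\<close>) has rank \<open>0\<close>.\<close>

definition hyperplanes_rank_le :: "nat \<Rightarrow> 'a::real_vector set set" where
  "hyperplanes_rank_le n = {H. H = {} \<or> (\<exists>k<n. hyperplane_dim H k)}"

lemma subspaces_dim_le_0: "subspaces_dim_le 0 = {{0}}"
  unfolding subspaces_dim_le_def by (auto simp: fd_subspace_dim_0_iff)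

lemma hyperplanes_rank_le_0: "hyperplanes_rank_le 0 = {{}}"
  unfolding hyperplanes_rank_le_def by auto

lemma fd_subspace_dim_exact_rank:
  "fd_subspace_dim T (Suc n) \<Longrightarrow> T \<in> subspaces_dim_le (Suc n) - subspaces_dim_le n"
  unfolding subspaces_dim_le_def by (auto dest: fd_subspace_dim_unique)

lemma hyperplane_dim_exact_rank:
  "hyperplane_dim H n \<longleftrightarrow> H \<in> hyperplanes_rank_le (Suc n) - hyperplanes_rank_le n"
proof
  assume H: "hyperplane_dim H n"
  have "\<not> hyperplane_dim H k" if "k < n" for k
    using hyperplane_dim_unique[OF H] that by blast
  then show "H \<in> hyperplanes_rank_le (Suc n) - hyperplanes_rank_le n"
    using H hyperplane_dim_nonempty[OF H] unfolding hyperplanes_rank_le_def by auto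
next
  assume "H \<in> hyperplanes_rank_le (Suc n) - hyperplanes_rank_le n"
  then have "\<exists>k<Suc n. hyperplane_dim H k" "\<not> (\<exists>k<n. hyperplane_dim H k)"
    unfolding hyperplanes_rank_le_def by auto
  then show "hyperplane_dim H n" using less_Suc_eq by blast
qed

lemma subspaces_dim_le_Inter:
  assumes "\<F> \<noteq> {}" "\<F> \<subseteq> subspaces_dim_le n"
  shows "\<Inter>\<F> \<in> subspaces_dim_le n"
proof -
  obtain T k where T: "T \<in> \<F>" "k \<le> n" "fd_subspace_dim T k"
    using assms unfolding subspaces_dim_le_def by blast
  have "\<forall>S\<in>\<F>. subspace S"
    using assms(2) fd_subspace_dim_subspace unfolding subspaces_dim_le_def by blast
  then have "subspace (\<Inter>\<F>)" by (rule subspace_Inter)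
  then have "fd_subspace_dim (\<Inter>\<F>) (dim (\<Inter>\<F>))" "dim (\<Inter>\<F>) \<le> k"
    using fd_subspace_dim_subset[of "\<Inter>\<F>" T k] T(1,3) by (simp_all add: Inter_lower)
  then show ?thesis
    using T(2) unfolding subspaces_dim_le_def by (intro CollectI exI[of _ "dim (\<Inter>\<F>)"]) simp
qed

lemma subspaces_dim_le_psubset:
  assumes "A \<in> subspaces_dim_le (Suc n) - subspaces_dim_le n"
    and "X \<in> subspaces_dim_le (Suc n)" "X \<subset> A"
  shows "X \<in> subspaces_dim_le n"
proof -
  have "fd_subspace_dim A (Suc n)"
    using assms(1) unfolding subspaces_dim_le_def by (auto simp: le_Suc_eq)
  moreover have "subspace X"
    using assms(2) fd_subspace_dim_subspace unfolding subspaces_dim_le_def by blast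
  ultimately obtain k where "k < Suc n" "fd_subspace_dim X k"
    using fd_subspace_dim_psubset assms(3) by blast
  then show ?thesis unfolding subspaces_dim_le_def by (auto simp: less_Suc_eq_le)
qed

lemma hyperplanes_rank_le_Inter:
  assumes "\<F> \<noteq> {}" "\<F> \<subseteq> hyperplanes_rank_le n"
  shows "\<Inter>\<F> \<in> hyperplanes_rank_le n"
proof (cases "\<Inter>\<F> = {}")
  case False
  then obtain p where p: "p \<in> \<Inter>\<F>" by blast
  let ?tr = "\<lambda>H. (\<lambda>y. - p + y) ` H"
  have dims: "\<exists>k<n. hyperplane_dim H k" if "H \<in> \<F>" for H
    using assms(2) that p unfolding hyperplanes_rank_le_def by blast
  obtain H k where H: "H \<in> \<F>" "k < n" "hyperplane_dim H k"
    using assms(1) dims by blast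
  have "?tr (\<Inter>\<F>) = (\<Inter>H\<in>\<F>. ?tr H)"
    using image_INT[OF translate_inj_on[of "- p" UNIV], of \<F> id H] H(1) by simp
  moreover have "\<forall>S\<in>?tr ` \<F>. subspace S"
    using dims p hyperplane_translate_subspace by blast
  ultimately have "subspace (?tr (\<Inter>\<F>))"
    using subspace_Inter by metis
  moreover have "?tr (\<Inter>\<F>) \<subseteq> ?tr H" using H(1) by blast
  moreover have "fd_subspace_dim (?tr H) k"
    using H(3) hyperplane_dim_translate[of p H] H(1) p by blast
  ultimately have "fd_subspace_dim (?tr (\<Inter>\<F>)) (dim (?tr (\<Inter>\<F>)))" "dim (?tr (\<Inter>\<F>)) \<le> k"
    using fd_subspace_dim_subset by blast+
  then have "hyperplane_dim (\<Inter>\<F>) (dim (?tr (\<Inter>\<F>)))" "dim (?tr (\<Inter>\<F>)) < n"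
    using hyperplane_dim_translate[OF p] H(2) by auto
  then show ?thesis unfolding hyperplanes_rank_le_def by blast
qed (simp add: hyperplanes_rank_le_def)

lemma hyperplanes_rank_le_psubset:
  assumes "A \<in> hyperplanes_rank_le (Suc n) - hyperplanes_rank_le n"
    and "X \<in> hyperplanes_rank_le (Suc n)" "X \<subset> A"
  shows "X \<in> hyperplanes_rank_le n"
proof (cases "X = {}")
  case False
  then obtain p where p: "p \<in> X" by blast
  then have pA: "p \<in> A" using assms(3) by blast
  let ?tr = "\<lambda>H. (\<lambda>y. - p + y) ` H"
  have "hyperplane_dim A n" using assms(1) hyperplane_dim_exact_rank by blast
  then have A: "fd_subspace_dim (?tr A) n" unfolding hyperplane_dim_translate[OF pA] .
  obtain j where "hyperplane_dim X j"
    using assms(2) False unfolding hyperplanes_rank_le_def by blast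
  then have X: "subspace (?tr X)" using p by (rule hyperplane_translate_subspace)
  have "?tr X \<subset> ?tr A"
    using assms(3) translate_inj_on[of "- p" UNIV]
    by (simp add: psubset_eq inj_image_subset_iff inj_image_eq_iff)
  then obtain k where "k < n" "fd_subspace_dim (?tr X) k"
    using fd_subspace_dim_psubset[OF X _ A] by blast
  then show ?thesis
    unfolding hyperplanes_rank_le_def hyperplane_dim_translate[OF p, symmetric] by blast
qed (simp add: hyperplanes_rank_le_def)

lemma inj_fd_subspace_dim_nonzero:
  fixes C :: "nat \<Rightarrow> 'a::real_vector set"
  assumes "inj C" "\<And>i. fd_subspace_dim (C i) j"
  shows "j \<noteq> 0"
proof
  assume "j = 0"
  then have "C 0 = C 1" using assms(2) by (simp add: fd_subspace_dim_0_iff)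
  then show False using injD[OF assms(1), of 0 1] by simp
qed

lemma graded_flats_subspaces:
  assumes "finite_measure Q" "\<And>H j. hyperplane_dim H j \<Longrightarrow> H \<in> sets Q"
  shows "graded_flats Q subspaces_dim_le"
proof -
  interpret finite_measure Q by (rule assms(1))
  show ?thesis
  proof
    show "subspaces_dim_le n \<subseteq> sets Q" for n
      using assms(2) fd_subspace_dim_imp_hyperplane_dim unfolding subspaces_dim_le_def by blast
    show "A = B" if "A \<in> subspaces_dim_le 0" "B \<in> subspaces_dim_le 0" for A B :: "'a set"
      using that by (simp add: subspaces_dim_le_0)
  qed (fact subspaces_dim_le_Inter subspaces_dim_le_psubset)+
qed

lemma graded_flats_hyperplanes:
  assumes "finite_measure Q" "\<And>H j. hyperplane_dim H j \<Longrightarrow> H \<in> sets Q"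
  shows "graded_flats Q hyperplanes_rank_le"
proof -
  interpret finite_measure Q by (rule assms(1))
  show ?thesis
  proof
    show "hyperplanes_rank_le n \<subseteq> sets Q" for n
      using assms(2) unfolding hyperplanes_rank_le_def by auto
    show "A = B" if "A \<in> hyperplanes_rank_le 0" "B \<in> hyperplanes_rank_le 0" for A B :: "'a set"
      using that by (simp add: hyperplanes_rank_le_0)
  qed (fact hyperplanes_rank_le_Inter hyperplanes_rank_le_psubset)+
qed

context
  fixes Q :: "'a::real_vector measure"
  assumes finite_Q: "finite_measure Q"
    and hyperplanes_sets: "\<And>H j. hyperplane_dim H j \<Longrightarrow> H \<in> sets Q"
begin

interpretation H: graded_flats Q hyperplanes_rank_le
  using finite_Q hyperplanes_sets by (rule graded_flats_hyperplanes)

interpretation S: graded_flats Q subspaces_dim_le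
  using finite_Q hyperplanes_sets by (rule graded_flats_subspaces)

corollary hyperplanes_limit_measure_eq:
  fixes C :: "nat \<Rightarrow> 'a set"
  assumes "inj C" "\<And>i. hyperplane_dim (C i) j" "(\<lambda>i. measure Q (C i)) \<longlonglongrightarrow> L"
  shows "\<exists>F. (F = {} \<or> (\<exists>k<j. hyperplane_dim F k)) \<and> L = measure Q F \<and> infinite {i. F \<subseteq> C i}"
proof -
  obtain F where "F \<in> hyperplanes_rank_le j" "L = measure Q F" "infinite {i. F \<subseteq> C i}"
    using H.limit_measure_eq_lower_flat[OF assms(1) _ assms(3)] assms(2) hyperplane_dim_exact_rank
    by blast
  then show ?thesis unfolding hyperplanes_rank_le_def by blast
qed

corollary hyperplanes_not_strict_mono_measure:
  fixes C :: "nat \<Rightarrow> 'a set"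
  assumes "inj C" "\<And>i. hyperplane_dim (C i) j"
  shows "\<not> strict_mono (\<lambda>i. measure Q (C i))"
  using H.not_strict_mono_measure[OF assms(1)] assms(2) hyperplane_dim_exact_rank by blast

corollary subspaces_limit_measure_eq:
  fixes C :: "nat \<Rightarrow> 'a set"
  assumes "inj C" "\<And>i. fd_subspace_dim (C i) j" "(\<lambda>i. measure Q (C i)) \<longlonglongrightarrow> L"
  shows "\<exists>F. (\<exists>k<j. fd_subspace_dim F k) \<and> L = measure Q F \<and> infinite {i. F \<subseteq> C i}"
proof -
  obtain j' where j: "j = Suc j'"
    using inj_fd_subspace_dim_nonzero[OF assms(1,2)] not0_implies_Suc by blast
  then obtain F where "F \<in> subspaces_dim_le j'" "L = measure Q F" "infinite {i. F \<subseteq> C i}"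
    using S.limit_measure_eq_lower_flat[OF assms(1) _ assms(3)] assms(2) fd_subspace_dim_exact_rank
    by blast
  then show ?thesis unfolding subspaces_dim_le_def j by (auto simp: less_Suc_eq_le)
qed

corollary subspaces_not_strict_mono_measure:
  fixes C :: "nat \<Rightarrow> 'a set"
  assumes "inj C" "\<And>i. fd_subspace_dim (C i) j"
  shows "\<not> strict_mono (\<lambda>i. measure Q (C i))"
proof -
  obtain j' where "j = Suc j'"
    using inj_fd_subspace_dim_nonzero[OF assms(1,2)] not0_implies_Suc by blast
  then show ?thesis
    using S.not_strict_mono_measure[OF assms(1)] assms(2) fd_subspace_dim_exact_rank by blast
qed

end

theorem lemma9:
  fixes Q :: "'a::real_vector measure"
  assumes "prob_space Q"
    and "space Q = UNIV"
    and "\<And>H j. hyperplane_dim H j \<Longrightarrow> H \<in> sets Q"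
  shows
    "(\<forall>(j::nat) (C::nat \<Rightarrow> 'a set) (L::real).
        inj C \<and> (\<forall>i. hyperplane_dim (C i) j) \<and> (\<lambda>i. measure Q (C i)) \<longlonglongrightarrow> L \<longrightarrow>
        (\<exists>F. (F = {} \<or> (\<exists>k<j. hyperplane_dim F k)) \<and> L = measure Q F \<and>
             infinite {i. F \<subseteq> C i}))
   \<and> (\<forall>(j::nat) (C::nat \<Rightarrow> 'a set).
        inj C \<and> (\<forall>i. hyperplane_dim (C i) j) \<longrightarrow> \<not> strict_mono (\<lambda>i. measure Q (C i)))
   \<and> (\<forall>(j::nat) (C::nat \<Rightarrow> 'a set) (L::real).
        inj C \<and> (\<forall>i. fd_subspace_dim (C i) j) \<and> (\<lambda>i. measure Q (C i)) \<longlonglongrightarrow> L \<longrightarrow>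
        (\<exists>F. (\<exists>k<j. fd_subspace_dim F k) \<and> L = measure Q F \<and>
             infinite {i. F \<subseteq> C i}))
   \<and> (\<forall>(j::nat) (C::nat \<Rightarrow> 'a set).
        inj C \<and> (\<forall>i. fd_subspace_dim (C i) j) \<longrightarrow> \<not> strict_mono (\<lambda>i. measure Q (C i)))"
proof -
  have Q: "finite_measure Q" using assms(1) by (rule prob_space.finite_measure)
  show ?thesis
    by (intro conjI allI impI; elim conjE;
        rule hyperplanes_limit_measure_eq[OF Q assms(3)] hyperplanes_not_strict_mono_measure[OF Q assms(3)]
          subspaces_limit_measure_eq[OF Q assms(3)] subspaces_not_strict_mono_measure[OF Q assms(3)];
        blast)
qed

end
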